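(* Let $\mu>1$, $\gamma=\mu\gamma^N_1$, let $p\ge2$ and $q=p/(p-1)$, and let $(\rho_k)_{k\ge1}$ be an increasing positive sequence with $K_q<\infty$. Then there exists a constant $B_p<\infty$ (depending on $p,\mu,(\rho_k)$ but not on $N$ or $\delta$) such that for all $N\ge3$, all $\delta>0$ and all $z\in C_\delta$, $$\|x(Nz)\|_p^p\le\delta^p\,N\,B_p.$$
   Context: $\gamma^N_1=\frac1{2\sin^2(\pi/N)}$; $\lambda_{k,N}=-1+2\gamma\sin^2(k\pi/N)$ for $0\le k\le N-1$ (indices modulo $N$). $\omega=e^{2\pi i/N}$. $\widehat{\mathbb{R}}^N=\{z\in\mathbb{C}^N:z_k=\overline{z_{N-k}}\ \forall k\}$ (so $z_0\in\mathbb{R}$). For $z\in\widehat{\mathbb{R}}^N$, $x(Nz)\in\mathbb{R}^N$ has components $x_j(Nz)=\sum_{k=0}^{N-1}\omega^{jk}z_k$ (inverse map: $z_k=\frac1N\sum_j\omega^{-jk}x_j$). Given an increasing positive sequence $(\rho_k)_{k\ge1}$, set $r_{0,N}=1$ and $r_{k,N}=r_{N-k,N}=\rho_k$ for $1\le k\le\lfloor N/2\rfloor$; $K_p=\big(\sum_{k\ge1}\rho_k^p/k^p\big)^{1/p}$; for $\delta>0$, $C_\delta=\{z\in\widehat{\mathbb{R}}^N:|z_k|\le\delta\,r_{k,N}/\sqrt{|\lambda_{k,N}|},\ 0\le k\le N-1\}$. $\|y\|_p=(\sum_j|y_j|^p)^{1/p}$. *)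

theory Defs
  imports "HOL-Analysis.Analysis"
begin

definition gamma1 :: "nat \<Rightarrow> real" where
  "gamma1 N = 1 / (2 * (sin (pi / real N))^2)"

definition lam :: "real \<Rightarrow> nat \<Rightarrow> nat \<Rightarrow> real" where
  "lam \<gamma> N k = -1 + 2 * \<gamma> * (sin (real k * pi / real N))^2"

definition omega :: "nat \<Rightarrow> complex" where
  "omega N = cis (2 * pi / real N)"

text \<open>hat R^N: vectors z_0..z_{N-1} (as functions on nat, only indices < N matter)
  with z_k = conj z_{N-k}, indices modulo N.\<close>
definition hatR :: "nat \<Rightarrow> (nat \<Rightarrow> complex) set" where
  "hatR N = {z. \<forall>k<N. z k = cnj (z ((N - k) mod N))}"

definition xvec :: "nat \<Rightarrow> (nat \<Rightarrow> complex) \<Rightarrow> nat \<Rightarrow> complex" where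
  "xvec N z j = (\<Sum>k<N. omega N ^ (j * k) * z k)"

text \<open>r_{0,N} = 1, r_{k,N} = r_{N-k,N} = rho_k for 1 <= k <= floor(N/2)\<close>
definition rr :: "(nat \<Rightarrow> real) \<Rightarrow> nat \<Rightarrow> nat \<Rightarrow> real" where
  "rr \<rho> N k = (if k mod N = 0 then 1 else \<rho> (min (k mod N) (N - k mod N)))"

definition Cdelta :: "real \<Rightarrow> real \<Rightarrow> (nat \<Rightarrow> real) \<Rightarrow> nat \<Rightarrow> (nat \<Rightarrow> complex) set" where
  "Cdelta \<delta> \<gamma> \<rho> N = {z \<in> hatR N. \<forall>k<N. cmod (z k) \<le> \<delta> * rr \<rho> N k / sqrt \<bar>lam \<gamma> N k\<bar>}"

definition pnorm_pow :: "real \<Rightarrow> nat \<Rightarrow> (nat \<Rightarrow> complex) \<Rightarrow> real" where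
  "pnorm_pow p N y = (\<Sum>j<N. cmod (y j) powr p)"

end

theory Submission
  imports Defs
begin

(* Proof idea.  Let w_k = r_{k,N} / sqrt |lambda_{k,N}| (box_radius below), so that z \<in> C_delta
   means |z_k| \<le> delta w_k.  The theorem combines two estimates that are uniform in N.

   (1) A Hausdorff-Young type inequality for the discrete Fourier transform x = x(Nz)
       (dft_hausdorff_young): if |z_k| \<le> a_k for k < N, p \<ge> 2 and q = p/(p-1), then
         sum_j |x_j|^p \<le> C_p N (sum_k a_k^q)^(p-1).
       For p = 2 this is Parseval's identity.  For p > 2 it is proved by a Marcinkiewicz-style
       argument: at each dyadic level t the coefficients are split into large ones (small in
       l^1, so their transform is at most t) and small ones (controlled in l^2 by Parseval),
       which bounds #{j. |x_j| > 2t}; a dyadic layer-cake decomposition of sum_j |x_j|^p and a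
       geometric series over the levels then give the inequality.

   (2) lambda_{k,N} \<ge> (mu-1) m^2/9 with m = min k (N-k), from sin x \<ge> x/3 on [0, pi/2];
       hence sum_k w_k^q \<le> K with K independent of N, since sum_k (rho_k/k)^q converges
       (box_radius_power_sum_bound).

   Taking a_k = delta w_k and using q(p-1) = p gives the theorem with B_p = C_p K^(p-1). *)

section \<open>Orthogonality of the discrete Fourier characters and Parseval's identity\<close>

lemma omega_power: "omega N ^ n = cis (real n * (2*pi/real N))"
  unfolding omega_def by (rule Complex.DeMoivre)

lemma cis_fraction_ne_1:
  fixes d :: int
  assumes d: "d \<noteq> 0" "\<bar>d\<bar> < int N"
  shows "cis (2*pi*real_of_int d / real N) \<noteq> 1"
proof
  assume "cis (2*pi*real_of_int d / real N) = 1"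
  hence "cos (2*pi*real_of_int d / real N) = 1" by (metis cis.simps(1) one_complex.sel(1))
  then obtain n :: int where n: "2*pi*real_of_int d / real N = real_of_int n * 2 * pi"
    using cos_one_2pi_int by blast
  have N0: "real N > 0" using d by simp
  hence "real_of_int d = real_of_int (n * int N)" using n by (simp add: field_simps)
  hence dn: "d = n * int N" by (simp only: of_int_eq_iff)
  hence "\<bar>n\<bar> * int N < 1 * int N" using d by (simp add: abs_mult)
  hence "n = 0" using N0 by (simp add: mult_less_cancel_right)
  thus False using dn d by simp
qed

lemma dft_orthogonality:
  assumes "k < N" "l < N"
  shows "(\<Sum>j<N. omega N ^ (j*k) * cnj (omega N ^ (j*l))) = (if k = l then of_nat N else 0)"
proof -
  define \<theta> where "\<theta> = 2*pi*real_of_int (int k - int l) / real N"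
  have char_product: "omega N ^ (j*k) * cnj (omega N ^ (j*l)) = cis \<theta> ^ j" for j
  proof -
    have "omega N ^ (j*k) * cnj (omega N ^ (j*l))
          = cis (real (j*k) * (2*pi/real N) + - (real (j*l) * (2*pi/real N)))"
      by (simp only: omega_power cis_cnj cis_mult)
    also have "real (j*k) * (2*pi/real N) + - (real (j*l) * (2*pi/real N)) = real j * \<theta>"
      unfolding \<theta>_def by (cases "N = 0") (simp_all add: field_simps)
    finally show ?thesis by (simp add: Complex.DeMoivre)
  qed
  show ?thesis
  proof (cases "k = l")
    case True
    then show ?thesis unfolding char_product \<theta>_def by simp
  next
    case False
    have "cis \<theta> \<noteq> 1" unfolding \<theta>_def
      using False assms by (intro cis_fraction_ne_1) auto
    moreover have "cis \<theta> ^ N = 1"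
    proof -
      have "cis \<theta> ^ N = cis (2*pi*real_of_int (int k - int l))"
        using assms unfolding Complex.DeMoivre \<theta>_def by simp
      also have "\<dots> = 1" by (rule cis_multiple_2pi) simp
      finally show ?thesis .
    qed
    ultimately have "(\<Sum>j<N. cis \<theta> ^ j) = 0" by (simp add: geometric_sum)
    then show ?thesis using False unfolding char_product by simp
  qed
qed

lemma dft_parseval:
  "(\<Sum>j<N. (cmod (\<Sum>k<N. omega N ^ (j*k) * v k))^2) = real N * (\<Sum>k<N. (cmod (v k))^2)"
proof -
  have "complex_of_real (\<Sum>j<N. (cmod (\<Sum>k<N. omega N ^ (j*k) * v k))^2)
     = (\<Sum>j<N. (\<Sum>k<N. omega N ^ (j*k) * v k) * cnj (\<Sum>l<N. omega N ^ (j*l) * v l))"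
    by (simp only: of_real_sum complex_norm_square)
  also have "\<dots> = (\<Sum>j<N. \<Sum>l<N. \<Sum>k<N. v k * cnj (v l) * (omega N ^ (j*k) * cnj (omega N ^ (j*l))))"
    by (simp add: sum_distrib_left sum_distrib_right mult_ac)
  also have "\<dots> = (\<Sum>k<N. \<Sum>l<N. \<Sum>j<N. v k * cnj (v l) * (omega N ^ (j*k) * cnj (omega N ^ (j*l))))"
    by (subst sum.swap, subst (2) sum.swap, subst sum.swap) (rule refl)
  also have "\<dots> = (\<Sum>k<N. \<Sum>l<N. v k * cnj (v l) * (\<Sum>j<N. omega N ^ (j*k) * cnj (omega N ^ (j*l))))"
    by (simp add: sum_distrib_left)
  also have "\<dots> = (\<Sum>k<N. \<Sum>l<N. v k * cnj (v l) * (if k = l then of_nat N else 0))"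
    by (intro sum.cong refl) (subst dft_orthogonality, auto)
  also have "\<dots> = (\<Sum>k<N. v k * cnj (v k) * of_nat N)"
    by (simp add: if_distrib sum.delta cong: if_cong)
  also have "\<dots> = (\<Sum>k<N. complex_of_real (real N * (cmod (v k))^2))"
    by (intro sum.cong refl)
       (simp only: of_real_mult complex_norm_square of_real_of_nat_eq mult.commute)
  also have "\<dots> = complex_of_real (real N * (\<Sum>k<N. (cmod (v k))^2))"
    by (simp only: of_real_sum sum_distrib_left)
  finally show ?thesis using of_real_eq_iff by blast
qed

lemma norm_omega_power [simp]: "norm (omega N ^ n) = 1"
  by (simp add: omega_def norm_power)


section \<open>The weak-type estimate at a single level\<close>

text \<open>If |z_k| \<le> a_k and the entries with a_k above a threshold lv have l^1 mass at most t,
  then |x_j| > 2t forces the remaining (small) part of the transform to exceed t, and Parseval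
  applied to that part bounds the number of such j.\<close>
lemma dft_weak_type_bound:
  fixes z :: "nat \<Rightarrow> complex" and a :: "nat \<Rightarrow> real"
  assumes za: "\<forall>k<N. cmod (z k) \<le> a k" and t: "t > 0"
    and large: "(\<Sum>k<N. if lv < a k then a k else 0) \<le> t"
  shows "real (card {j. j<N \<and> 2*t < cmod (xvec N z j)}) * t^2
          \<le> real N * (\<Sum>k<N. if a k \<le> lv then (a k)^2 else 0)"
proof -
  define v where "v k = (if a k \<le> lv then z k else 0)" for k
  define u where "u k = (if a k \<le> lv then 0 else z k)" for k
  define U where "U j = (\<Sum>k<N. omega N^(j*k) * u k)" for j
  define V where "V j = (\<Sum>k<N. omega N^(j*k) * v k)" for j
  have split: "xvec N z j = U j + V j" for j
    unfolding xvec_def U_def V_def sum.distrib[symmetric]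
    by (intro sum.cong refl) (simp add: u_def v_def)
  have U_small: "cmod (U j) \<le> t" for j
  proof -
    have "cmod (U j) \<le> (\<Sum>k<N. cmod (omega N^(j*k) * u k))" unfolding U_def by (rule norm_sum)
    also have "\<dots> \<le> (\<Sum>k<N. if lv < a k then a k else 0)"
      by (intro sum_mono) (use za in \<open>auto simp: u_def norm_mult\<close>)
    finally show ?thesis using large by linarith
  qed
  let ?E = "{j. j<N \<and> 2*t < cmod (xvec N z j)}"
  have V_large: "t^2 \<le> (cmod (V j))^2" if "j \<in> ?E" for j
  proof -
    have "cmod (xvec N z j) \<le> cmod (U j) + cmod (V j)" unfolding split by (rule norm_triangle_ineq)
    hence "t \<le> cmod (V j)" using that U_small[of j] by simp
    thus ?thesis using t by (intro power_mono) auto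
  qed
  have "real (card ?E) * t^2 = (\<Sum>j\<in>?E. t^2)" by simp
  also have "\<dots> \<le> (\<Sum>j\<in>?E. (cmod (V j))^2)" by (rule sum_mono) (rule V_large)
  also have "\<dots> \<le> (\<Sum>j<N. (cmod (V j))^2)" by (rule sum_mono2) auto
  also have "\<dots> = real N * (\<Sum>k<N. (cmod (v k))^2)" unfolding V_def by (rule dft_parseval)
  also have "\<dots> \<le> real N * (\<Sum>k<N. if a k \<le> lv then (a k)^2 else 0)"
    by (intro mult_left_mono sum_mono) (use za in \<open>auto simp: v_def intro: power_mono\<close>)
  finally show ?thesis .
qed

text \<open>With S = sum_k a_k^q, the threshold (S/t)^(p-1) is chosen so that the entries above it
  have l^1 mass at most t: each of them satisfies a_k \<le> a_k^q t/S.\<close>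
lemma large_entries_l1_bound:
  fixes a :: "nat \<Rightarrow> real"
  assumes p: "p > 2" and q: "q = p/(p-1)" and S: "S = (\<Sum>k<N. a k powr q)" "S > 0"
    and a0: "\<forall>k<N. 0 \<le> a k" and t: "t > 0"
  shows "(\<Sum>k<N. if (S/t) powr (p-1) < a k then a k else 0) \<le> t"
proof -
  let ?l = "(S/t) powr (p-1)"
  have l_pos: "?l > 0" using S t by simp
  have l_power: "?l powr (1-q) = t/S"
  proof -
    have "(p-1)*(1-q) = -1" using p q by (simp add: field_simps)
    hence "?l powr (1-q) = (S/t) powr (-1)" by (simp add: powr_powr)
    also have "\<dots> = t/S" using S t by (simp add: powr_minus_divide)
    finally show ?thesis .
  qed
  have "1 \<le> p/(p-1)" using p by (simp add: le_divide_eq)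
  hence q1: "1 - q \<le> 0" using q by simp
  have entry: "(if ?l < a k then a k else 0) \<le> a k powr q * (t/S)" if "k<N" for k
  proof (cases "?l < a k")
    case True
    have ak: "a k > 0" using True l_pos by linarith
    have "a k = a k powr q * a k powr (1-q)" using ak by (simp add: powr_add[symmetric])
    also have "\<dots> \<le> a k powr q * ?l powr (1-q)"
      by (rule mult_left_mono, rule powr_mono2'[OF q1 l_pos]) (use True in simp_all)
    finally show ?thesis using True l_power by simp
  next
    case False thus ?thesis using a0 that S t by simp
  qed
  have "(\<Sum>k<N. if ?l < a k then a k else 0) \<le> (\<Sum>k<N. a k powr q * (t/S))"
    by (rule sum_mono) (rule entry, simp)
  also have "\<dots> = S * (t/S)" by (simp only: sum_distrib_right[symmetric] S(1)[symmetric])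
  also have "\<dots> = t" using S by simp
  finally show ?thesis .
qed

lemma dft_level_count_bound:
  fixes z :: "nat \<Rightarrow> complex" and a :: "nat \<Rightarrow> real"
  assumes p: "p > 2" and q: "q = p/(p-1)" and S: "S = (\<Sum>k<N. a k powr q)" "S > 0"
    and za: "\<forall>k<N. cmod (z k) \<le> a k" and t: "t > 0"
  shows "t powr p * real (card {j. j<N \<and> 2*t < cmod (xvec N z j)})
         \<le> t powr (p-2) * (real N * (\<Sum>k<N. if a k \<le> (S/t) powr (p-1) then (a k)^2 else 0))"
proof -
  have a0: "\<forall>k<N. 0 \<le> a k" using za norm_ge_zero order_trans by blast
  have count: "real (card {j. j<N \<and> 2*t < cmod (xvec N z j)}) * t^2
      \<le> real N * (\<Sum>k<N. if a k \<le> (S/t) powr (p-1) then (a k)^2 else 0)"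
    by (rule dft_weak_type_bound[OF za t large_entries_l1_bound[OF p q S a0 t]])
  have "t powr p = t powr (p-2) * t^2"
    using t by (simp add: powr_add[symmetric] flip: powr_numeral)
  hence "t powr p * real (card {j. j<N \<and> 2*t < cmod (xvec N z j)})
         = t powr (p-2) * (real (card {j. j<N \<and> 2*t < cmod (xvec N z j)}) * t^2)"
    by simp
  also have "\<dots> \<le> t powr (p-2) * (real N * (\<Sum>k<N. if a k \<le> (S/t) powr (p-1) then (a k)^2 else 0))"
    by (rule mult_left_mono[OF count]) simp
  finally show ?thesis .
qed

section \<open>Dyadic decomposition\<close>

definition dyadic_level :: "real \<Rightarrow> nat \<Rightarrow> real" where
  "dyadic_level M n = M / 2^n"

lemma dyadic_level_pos: "M > 0 \<Longrightarrow> dyadic_level M n > 0"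
  by (simp add: dyadic_level_def)

lemma dyadic_scale_exists:
  fixes x M :: real
  assumes x: "0 < x" and xM: "x \<le> M"
  shows "\<exists>n. 2 * dyadic_level M n < x \<and> x \<le> 4 * dyadic_level M n"
proof -
  define P where "P n \<longleftrightarrow> 2 * (M/2^n) < x" for n :: nat
  obtain m :: nat where m: "2*M / x < 2^m" using real_arch_pow[of 2 "2*M / x"] by auto
  have "P m" using m x unfolding P_def by (simp add: field_simps)
  define n where "n = (LEAST n. P n)"
  have Pn: "P n" unfolding n_def by (rule LeastI) fact
  have "n \<noteq> 0"
  proof
    assume "n = 0"
    with Pn x xM show False unfolding P_def by simp
  qed
  then obtain n' where n': "n = Suc n'" by (cases n) auto
  have "\<not> P n'" using n' unfolding n_def by (metis lessI not_less_Least)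
  hence "x \<le> 4 * (M/2^n)" unfolding P_def n' by (simp add: field_simps)
  with Pn show ?thesis unfolding P_def dyadic_level_def by blast
qed

text \<open>Dyadic layer cake: comparing each value X_j with the level t_n whose window contains it,
  the p-th power sum is controlled by the sizes of the level sets {j. X_j > 2 t_n}.\<close>
lemma dyadic_layer_cake:
  fixes X :: "nat \<Rightarrow> real" and M p :: real
  assumes p: "p \<ge> 0" and X: "\<And>j. j < N \<Longrightarrow> 0 \<le> X j \<and> X j \<le> M"
  shows "\<exists>L. (\<Sum>j<N. X j powr p)
           \<le> 4 powr p * (\<Sum>n<L. dyadic_level M n powr p
                                  * real (card {j. j<N \<and> 2 * dyadic_level M n < X j}))"
proof -
  let ?t = "dyadic_level M"
  have "\<exists>n. 0 < X j \<longrightarrow> 2 * ?t n < X j \<and> X j \<le> 4 * ?t n" if "j < N" for j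
    using dyadic_scale_exists X[OF that] by blast
  then obtain f where f: "\<And>j. j < N \<Longrightarrow> 0 < X j \<Longrightarrow> 2 * ?t (f j) < X j \<and> X j \<le> 4 * ?t (f j)"
    by metis
  define L where "L = Suc (\<Sum>j<N. f j)"
  have fL: "f j < L" if "j < N" for j
    using member_le_sum[of j "{..<N}" f] that unfolding L_def by simp
  define ind where "ind n j = (if 2 * ?t n < X j then ?t n powr p else 0)" for n j
  have pointwise: "X j powr p \<le> 4 powr p * (\<Sum>n<L. ind n j)" if "j < N" for j
  proof (cases "X j > 0")
    case False
    thus ?thesis using X[OF that] by (simp add: sum_nonneg ind_def)
  next
    case True
    note fj = f[OF that True]
    have "X j powr p \<le> (4 * ?t (f j)) powr p" using fj True p by (intro powr_mono2) auto
    also have "\<dots> = 4 powr p * ind (f j) j" using fj by (simp add: powr_mult ind_def)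
    also have "ind (f j) j \<le> (\<Sum>n<L. ind n j)"
      by (rule member_le_sum) (use fL[OF that] in \<open>auto simp: ind_def\<close>)
    finally show ?thesis by simp
  qed
  have level: "(\<Sum>j<N. ind n j) = ?t n powr p * real (card {j. j<N \<and> 2 * ?t n < X j})" for n
  proof -
    have "(\<Sum>j<N. ind n j) = (\<Sum>j\<in>{j\<in>{..<N}. 2 * ?t n < X j}. ?t n powr p)"
      unfolding ind_def by (rule sum.inter_filter[symmetric]) simp
    also have "{j\<in>{..<N}. 2 * ?t n < X j} = {j. j<N \<and> 2 * ?t n < X j}" by auto
    finally show ?thesis by simp
  qed
  have "(\<Sum>j<N. X j powr p) \<le> (\<Sum>j<N. 4 powr p * (\<Sum>n<L. ind n j))"
    by (intro sum_mono pointwise) simp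
  also have "\<dots> = 4 powr p * (\<Sum>n<L. \<Sum>j<N. ind n j)"
    by (simp add: sum_distrib_left[symmetric] sum.swap[of _ "{..<N}" "{..<L}"])
  finally show ?thesis unfolding level by blast
qed

lemma dyadic_geometric_bound:
  fixes M T s :: real
  assumes M: "M > 0" and s: "s > 0" and T: "T > 0"
  shows "(\<Sum>n\<in>{n. n<L \<and> dyadic_level M n \<le> T}. dyadic_level M n powr s)
         \<le> T powr s / (1 - 2 powr (-s))"
proof -
  define F where "F = {n. n<L \<and> dyadic_level M n \<le> T}"
  define r where "r = (2::real) powr (-s)"
  have "(2::real) powr (-s) < 2 powr 0" using s by (subst powr_less_cancel_iff) auto
  hence r: "0 < r" "r < 1" unfolding r_def by auto
  have dyadic_power: "dyadic_level M n powr s = M powr s * r^n" for n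
    unfolding r_def dyadic_level_def using M
    by (simp add: powr_divide powr_minus_divide powr_powr powr_realpow[symmetric] powr_power
        mult.commute)
  show ?thesis
  proof (cases "F = {}")
    case True
    thus ?thesis using r unfolding F_def[symmetric] r_def[symmetric] by simp
  next
    case False
    have fin: "finite F" unfolding F_def by simp
    define n0 where "n0 = Min F"
    have n0F: "n0 \<in> F" and n0_le: "\<And>n. n \<in> F \<Longrightarrow> n0 \<le> n"
      using fin False n0_def by simp_all
    have "(\<Sum>n\<in>F. dyadic_level M n powr s) = M powr s * r^n0 * (\<Sum>n\<in>F. r^(n-n0))"
      by (simp add: sum_distrib_left dyadic_power power_add[symmetric] n0_le mult.assoc)
    also have "(\<Sum>n\<in>F. r^(n-n0)) = (\<Sum>m\<in>(\<lambda>n. n-n0)`F. r^m)"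
    proof -
      have "inj_on (\<lambda>n. n-n0) F" by (rule inj_onI) (metis n0_le le_add_diff_inverse)
      thus ?thesis by (simp add: sum.reindex)
    qed
    also have "\<dots> \<le> (\<Sum>m. r^m)"
      by (rule sum_le_suminf) (use r fin in \<open>auto intro: summable_geometric\<close>)
    also have "\<dots> = 1/(1-r)" using r by (simp add: suminf_geometric)
    finally have sum_le: "(\<Sum>n\<in>F. dyadic_level M n powr s) \<le> M powr s * r^n0 * (1/(1-r))"
      using r M by (simp add: mult_left_mono)
    have "M powr s * r^n0 = dyadic_level M n0 powr s" by (simp add: dyadic_power)
    also have "\<dots> \<le> T powr s"
      using n0F s dyadic_level_pos[OF M, of n0] unfolding F_def by (intro powr_mono2) auto
    finally have "M powr s * r^n0 * (1/(1-r)) \<le> T powr s * (1/(1-r))"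
      using r by (intro mult_right_mono) auto
    thus ?thesis using sum_le unfolding F_def r_def by simp
  qed
qed

text \<open>The contribution of a single coefficient a to all dyadic levels: a^2 is only counted at
  levels t with a \<le> (S/t)^(p-1), i.e. t \<le> T := S a^(-1/(p-1)), and the weights t^(p-2) sum
  geometrically; since 2 + (-1/(p-1))(p-2) = q the result is a multiple of a^q.\<close>
lemma dyadic_level_sum:
  fixes M S a p q :: real
  assumes p: "p > 2" and q: "q = p/(p-1)" and M: "M > 0" and S: "S > 0" and a: "a \<ge> 0"
  shows "(\<Sum>n<L. dyadic_level M n powr (p-2)
                   * (if a \<le> (S / dyadic_level M n) powr (p-1) then a^2 else 0))
         \<le> S powr (p-2) * a powr q / (1 - 2 powr (-(p-2)))"
proof (cases "a = 0")
  case True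
  then show ?thesis by simp
next
  case False
  hence a_pos: "a > 0" using a by simp
  let ?t = "dyadic_level M"
  define T where "T = S * a powr (-(1/(p-1)))"
  have T_pos: "T > 0" unfolding T_def using S a_pos by simp
  have level_le_T: "t \<le> T" if t_pos: "t > 0" and below: "a \<le> (S/t) powr (p-1)" for t
  proof -
    have "a powr (1/(p-1)) \<le> ((S/t) powr (p-1)) powr (1/(p-1))"
      using below a_pos p by (intro powr_mono2) auto
    also have "\<dots> = S / t" using p S t_pos by (simp add: powr_powr)
    finally have "t \<le> S / a powr (1/(p-1))" using t_pos a_pos by (simp add: field_simps)
    thus ?thesis unfolding T_def by (simp add: powr_minus_divide)
  qed
  have "(\<Sum>n<L. ?t n powr (p-2) * (if a \<le> (S / ?t n) powr (p-1) then a^2 else 0))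
        = a^2 * (\<Sum>n<L. if a \<le> (S / ?t n) powr (p-1) then ?t n powr (p-2) else 0)"
    by (simp add: sum_distrib_left if_distrib mult.commute cong: if_cong)
  also have "(\<Sum>n<L. if a \<le> (S / ?t n) powr (p-1) then ?t n powr (p-2) else 0)
             \<le> (\<Sum>n<L. if ?t n \<le> T then ?t n powr (p-2) else 0)"
    by (intro sum_mono) (use level_le_T dyadic_level_pos[OF M] in auto)
  also have "\<dots> = (\<Sum>n\<in>{n. n<L \<and> ?t n \<le> T}. ?t n powr (p-2))"
    by (simp add: sum.If_cases Collect_conj_eq lessThan_def Int_commute)
  also have "\<dots> \<le> T powr (p-2) / (1 - 2 powr (-(p-2)))"
    by (rule dyadic_geometric_bound[OF M _ T_pos]) (use p in simp)
  finally have sum_le: "(\<Sum>n<L. ?t n powr (p-2) * (if a \<le> (S / ?t n) powr (p-1) then a^2 else 0))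
                   \<le> a^2 * (T powr (p-2) / (1 - 2 powr (-(p-2))))"
    by (simp add: mult_left_mono)
  have exponent: "2 + (-(1/(p-1)) * (p-2)) = q" using p q by (simp add: field_simps)
  have "a^2 * T powr (p-2) = S powr (p-2) * (a powr 2 * a powr (-(1/(p-1)) * (p-2)))"
    unfolding T_def using a_pos S by (simp add: powr_mult powr_powr)
  also have "a powr 2 * a powr (-(1/(p-1)) * (p-2)) = a powr q"
    by (simp only: powr_add[symmetric] exponent)
  finally have "a^2 * T powr (p-2) = S powr (p-2) * a powr q" .
  thus ?thesis using sum_le by simp
qed


section \<open>A Hausdorff-Young inequality for the discrete Fourier transform\<close>

lemma dft_hausdorff_young_gt2:
  fixes z :: "nat \<Rightarrow> complex" and a :: "nat \<Rightarrow> real"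
  assumes p: "p > 2" and q: "q = p/(p-1)" and za: "\<forall>k<N. cmod (z k) \<le> a k"
  shows "(\<Sum>j<N. cmod (xvec N z j) powr p)
         \<le> 4 powr p / (1 - 2 powr (-(p-2))) * real N * (\<Sum>k<N. a k powr q) powr (p-1)"
proof -
  define S where "S = (\<Sum>k<N. a k powr q)"
  define D where "D = 1 - 2 powr (-(p-2))"
  define X where "X j = cmod (xvec N z j)" for j
  have a0: "\<forall>k<N. 0 \<le> a k" using za norm_ge_zero order_trans by blast
  consider "S = 0" | "S > 0" unfolding S_def by (metis powr_ge_zero sum_nonneg less_eq_real_def)
  then show ?thesis
  proof cases
    case 1
    hence "\<forall>k<N. a k = 0" unfolding S_def by (subst (asm) sum_nonneg_eq_0_iff) auto
    hence "\<forall>k<N. z k = 0" using za by (metis norm_le_zero_iff)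
    hence "xvec N z j = 0" for j unfolding xvec_def by simp
    thus ?thesis using p 1 unfolding S_def by simp
  next
    case 2
    define M where "M = 1 + (\<Sum>j<N. X j)"
    have X_le_M: "0 \<le> X j \<and> X j \<le> M" if "j < N" for j
      using member_le_sum[of j "{..<N}" X] that unfolding M_def X_def by simp
    have M_pos: "M > 0" unfolding M_def X_def by (smt (verit) norm_ge_zero sum_nonneg)
    let ?t = "dyadic_level M"
    define c where "c n k = (if a k \<le> (S / ?t n) powr (p-1) then (a k)^2 else 0)" for n k
    obtain L where layer_cake: "(\<Sum>j<N. X j powr p)
        \<le> 4 powr p * (\<Sum>n<L. ?t n powr p * real (card {j. j<N \<and> 2 * ?t n < X j}))"
      using dyadic_layer_cake[of p N X M] p X_le_M by auto
    also have "\<dots> \<le> 4 powr p * (\<Sum>n<L. ?t n powr (p-2) * (real N * (\<Sum>k<N. c n k)))"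
      unfolding X_def c_def
      by (intro mult_left_mono sum_mono dft_level_count_bound[OF p q S_def 2 za]
          dyadic_level_pos[OF M_pos]) simp
    also have "\<dots> = 4 powr p * real N * (\<Sum>k<N. \<Sum>n<L. ?t n powr (p-2) * c n k)"
      by (simp add: sum_distrib_left sum.swap[of _ "{..<L}" "{..<N}"] mult_ac)
    also have "\<dots> \<le> 4 powr p * real N * (\<Sum>k<N. S powr (p-2) * a k powr q / D)"
      unfolding c_def D_def
      by (intro mult_left_mono sum_mono dyadic_level_sum[OF p q M_pos 2]) (use a0 in auto)
    also have "(\<Sum>k<N. S powr (p-2) * a k powr q / D) = S powr (p-2) * S / D"
      unfolding S_def by (simp add: sum_distrib_left sum_divide_distrib)
    also have "S powr (p-2) * S = S powr (p-1)"
      using 2 powr_add[of S "p-2" 1] by simp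
    finally show ?thesis unfolding X_def S_def D_def by (simp add: field_simps)
  qed
qed

text \<open>The constant of the Hausdorff-Young inequality; for p = 2 it is Parseval's identity.\<close>
definition hy_constant :: "real \<Rightarrow> real" where
  "hy_constant p = (if p = 2 then 1 else 4 powr p / (1 - 2 powr (-(p-2))))"

lemma hy_constant_nonneg:
  assumes "p \<ge> 2" shows "hy_constant p \<ge> 0"
proof (cases "p = 2")
  case False
  hence "(2::real) powr (-(p-2)) < 2 powr 0" using assms by (subst powr_less_cancel_iff) auto
  thus ?thesis using False unfolding hy_constant_def by simp
qed (simp add: hy_constant_def)

lemma dft_hausdorff_young:
  fixes z :: "nat \<Rightarrow> complex" and a :: "nat \<Rightarrow> real"
  assumes p: "p \<ge> 2" and q: "q = p/(p-1)" and za: "\<forall>k<N. cmod (z k) \<le> a k"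
  shows "(\<Sum>j<N. cmod (xvec N z j) powr p)
         \<le> hy_constant p * real N * (\<Sum>k<N. a k powr q) powr (p-1)"
proof (cases "p = 2")
  case False
  hence "p > 2" using p by simp
  from dft_hausdorff_young_gt2[OF this q za] show ?thesis
    using False unfolding hy_constant_def by simp
next
  case True
  hence q2: "q = 2" using q by simp
  have a0: "\<forall>k<N. 0 \<le> a k" using za norm_ge_zero order_trans by blast
  have "(\<Sum>j<N. cmod (xvec N z j) powr p) = (\<Sum>j<N. (cmod (xvec N z j))^2)"
    using True by simp
  also have "\<dots> = real N * (\<Sum>k<N. (cmod (z k))^2)" unfolding xvec_def by (rule dft_parseval)
  also have "\<dots> \<le> real N * (\<Sum>k<N. (a k)^2)"
    by (intro mult_left_mono sum_mono power_mono) (use za in auto)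
  also have "(\<Sum>k<N. (a k)^2) = (\<Sum>k<N. a k powr q) powr (p-1)"
    using True q2 a0 by (simp add: sum_nonneg)
  finally show ?thesis using True unfolding hy_constant_def by simp
qed

section \<open>Lower bound for the eigenvalues lambda_{k,N}\<close>

text \<open>A crude form of Jordan's inequality, from the Maclaurin expansion of sine.\<close>
lemma sin_ge_third:
  fixes x :: real assumes "0 \<le> x" "x \<le> pi/2" shows "x/3 \<le> sin x"
proof -
  have "\<bar>sin x - (\<Sum>m<3. sin_coeff m * x ^ m)\<bar> \<le> inverse (fact 3) * \<bar>x\<bar> ^ 3"
    by (rule Maclaurin_sin_bound)
  moreover have "(\<Sum>m<3. sin_coeff m * x ^ m) = x"
    by (simp add: numeral_3_eq_3 sin_coeff_def)
  ultimately have "x - x^3/6 \<le> sin x" using assms by (simp add: abs_if fact_numeral split: if_splits)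
  moreover have "x \<le> 2" using assms pi_less_4 by linarith
  hence "x^3/6 \<le> 2*x/3" using assms mult_mono[of x 2 x 2] mult_right_mono[of "x*x" 4 x]
    by (simp add: power3_eq_cube)
  ultimately show ?thesis by linarith
qed

text \<open>With gamma = mu gamma_1^N one has lambda_{k,N} = -1 + mu sin^2(k pi/N)/sin^2(pi/N), and the
  ratio of sines is at least 1 and at least (m/3)^2 for m = min k (N-k).\<close>
lemma lam_lower_bound:
  assumes mu: "\<mu> > 1" and N: "N \<ge> 2" and k: "1 \<le> k" "k < N"
  shows "(\<mu> - 1) * (real (min k (N-k)))^2 / 9 \<le> lam (\<mu> * gamma1 N) N k"
proof -
  define m where "m = min k (N-k)"
  have m1: "1 \<le> m" and m2: "2*m \<le> N" using k unfolding m_def by auto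
  define \<theta> where "\<theta> = pi / real N"
  define x where "x = real m * pi / real N"
  have N_pos: "real N > 0" using N by simp
  have sin_k: "sin (real k * pi / real N) = sin x"
  proof (cases "m = k")
    case True thus ?thesis unfolding x_def by simp
  next
    case False
    hence "m = N - k" unfolding m_def by auto
    hence "real k * pi / real N = pi - x" unfolding x_def using k N_pos
      by (simp add: of_nat_diff field_simps)
    thus ?thesis by (simp add: sin_pi_minus)
  qed
  have th0: "0 < \<theta>" unfolding \<theta>_def using N_pos by simp
  have thx: "\<theta> \<le> x" unfolding \<theta>_def x_def using m1 N_pos by (simp add: divide_right_mono)
  have xpi: "x \<le> pi/2"
  proof -
    have "2 * real m * pi \<le> real N * pi" using m2 by (simp add: mult_right_mono)
    thus ?thesis unfolding x_def using N_pos by (simp add: field_simps)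
  qed
  have sin_th: "0 < sin \<theta>" using th0 thx xpi by (intro sin_gt_zero) auto
  define R where "R = (sin x)^2 / (sin \<theta>)^2"
  have R1: "1 \<le> R"
    using sin_monotone_2pi_le[of \<theta> x] th0 thx xpi sin_th unfolding R_def by (simp add: power_mono)
  have R2: "(real m)^2 / 9 \<le> R"
  proof -
    have "real m = x / \<theta>" unfolding x_def \<theta>_def using N_pos by simp
    hence "(real m)^2 / 9 = (x/\<theta>)^2 / 9" by simp
    also have "\<dots> = (x/3)^2 / \<theta>^2" by (simp add: power_divide)
    also have "\<dots> \<le> (sin x)^2 / \<theta>^2"
      using sin_ge_third[of x] th0 thx xpi by (intro divide_right_mono power_mono) auto
    also have "\<dots> \<le> (sin x)^2 / (sin \<theta>)^2"
      using sin_x_le_x[of \<theta>] th0 sin_th by (intro divide_left_mono power_mono mult_pos_pos) auto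
    finally show ?thesis unfolding R_def .
  qed
  have lam_eq: "lam (\<mu> * gamma1 N) N k = -1 + \<mu> * R"
    unfolding lam_def gamma1_def R_def sin_k \<theta>_def[symmetric] using sin_th by (simp add: field_simps)
  have "(\<mu> - 1) * (real m)^2 / 9 \<le> (\<mu> - 1) * R" using R2 mu by (simp add: mult_left_mono)
  also have "\<dots> \<le> -1 + \<mu> * R" using R1 by (simp add: algebra_simps)
  finally show ?thesis unfolding lam_eq m_def .
qed

section \<open>The radii of C_delta\<close>

text \<open>z \<in> C_delta means exactly |z_k| \<le> delta * box_radius k for k < N.\<close>
definition box_radius :: "real \<Rightarrow> (nat \<Rightarrow> real) \<Rightarrow> nat \<Rightarrow> nat \<Rightarrow> real" where
  "box_radius \<gamma> \<rho> N k = rr \<rho> N k / sqrt \<bar>lam \<gamma> N k\<bar>"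

lemma box_radius_bound:
  assumes mu: "\<mu> > 1" and N: "N \<ge> 2" and k: "1 \<le> k" "k < N"
    and rho: "\<And>k. k \<ge> 1 \<Longrightarrow> \<rho> k > 0"
  shows "box_radius (\<mu> * gamma1 N) \<rho> N k
         \<le> 3 / sqrt (\<mu> - 1) * (\<rho> (min k (N-k)) / real (min k (N-k)))"
proof -
  define m where "m = min k (N-k)"
  define l where "l = lam (\<mu> * gamma1 N) N k"
  have m1: "1 \<le> m" using k unfolding m_def by auto
  have rr_k: "rr \<rho> N k = \<rho> m" unfolding rr_def m_def using k by simp
  have lb_pos: "0 < sqrt (\<mu> - 1) * real m / 3" using mu m1 by simp
  have "sqrt ((\<mu> - 1) * (real m)^2 / 9) \<le> sqrt \<bar>l\<bar>"
    using lam_lower_bound[OF mu N k] unfolding m_def[symmetric] l_def[symmetric]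
    by (intro real_sqrt_le_mono) linarith
  hence sqrt_lb: "sqrt (\<mu> - 1) * real m / 3 \<le> sqrt \<bar>l\<bar>"
    using m1 by (simp add: real_sqrt_mult real_sqrt_divide)
  have "box_radius (\<mu> * gamma1 N) \<rho> N k = \<rho> m / sqrt \<bar>l\<bar>"
    unfolding box_radius_def rr_k l_def ..
  also have "\<dots> \<le> \<rho> m / (sqrt (\<mu> - 1) * real m / 3)"
  proof -
    have "0 < sqrt \<bar>l\<bar>" using sqrt_lb lb_pos by linarith
    then show ?thesis
      by (rule divide_left_mono[OF sqrt_lb less_imp_le[OF rho[OF m1]] mult_pos_pos[OF _ lb_pos]])
  qed
  also have "\<dots> = 3 / sqrt (\<mu> - 1) * (\<rho> m / real m)" by simp
  finally show ?thesis unfolding m_def .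
qed

text \<open>The key uniformity in N: sum_k box_radius_k^q is bounded by a constant, since each
  nonzero frequency k is controlled by (rho_m/m)^q with m = k or m = N-k.\<close>
lemma box_radius_power_sum_bound:
  assumes mu: "\<mu> > 1" and N: "N \<ge> 2" and q: "q \<ge> 0"
    and rho: "\<And>k. k \<ge> 1 \<Longrightarrow> \<rho> k > 0"
    and summ: "summable (\<lambda>k. (\<rho> (Suc k) / real (Suc k)) powr q)"
  shows "(\<Sum>k<N. box_radius (\<mu> * gamma1 N) \<rho> N k powr q)
         \<le> 1 + 2 * (3 / sqrt (\<mu> - 1)) powr q * (\<Sum>k. (\<rho> (Suc k) / real (Suc k)) powr q)"
proof -
  define w where "w k = box_radius (\<mu> * gamma1 N) \<rho> N k powr q" for k
  define g where "g m = (\<rho> m / real m) powr q" for m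
  define C where "C = (3 / sqrt (\<mu> - 1)) powr q"
  have C0: "C \<ge> 0" and g0: "\<And>m. g m \<ge> 0" unfolding C_def g_def by simp_all
  have w0: "w 0 = 1" unfolding w_def box_radius_def rr_def lam_def by simp
  have wk: "w k \<le> C * (g k + g (N-k))" if "k \<in> {1..<N}" for k
  proof -
    define m where "m = min k (N-k)"
    have m1: "1 \<le> m" using that unfolding m_def by auto
    have "0 \<le> \<rho> (min k (N-k))" using less_imp_le[OF rho[OF m1]] unfolding m_def .
    hence "0 \<le> box_radius (\<mu> * gamma1 N) \<rho> N k"
      unfolding box_radius_def rr_def using that by simp
    moreover have "box_radius (\<mu> * gamma1 N) \<rho> N k \<le> 3 / sqrt (\<mu> - 1) * (\<rho> m / real m)"
      unfolding m_def using that by (intro box_radius_bound[OF mu N _ _ rho]) auto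
    ultimately have "w k \<le> (3 / sqrt (\<mu> - 1) * (\<rho> m / real m)) powr q"
      unfolding w_def by (intro powr_mono2 q)
    also have "\<dots> = C * g m"
      unfolding C_def g_def by (rule powr_mult)
    also have "\<dots> \<le> C * (g k + g (N-k))"
      unfolding m_def using g0 C0 by (intro mult_left_mono) (auto simp: min_def)
    finally show ?thesis .
  qed
  have split: "(\<Sum>k<N. w k) = w 0 + (\<Sum>k\<in>{1..<N}. w k)"
    using N by (simp add: atLeast0LessThan[symmetric] sum.atLeast_Suc_lessThan)
  have reflect: "(\<Sum>k\<in>{1..<N}. g (N-k)) = (\<Sum>k\<in>{1..<N}. g k)"
    by (rule sum.reindex_bij_witness[where i="\<lambda>k. N-k" and j="\<lambda>k. N-k"]) auto
  have tail: "(\<Sum>k\<in>{1..<N}. g k) \<le> (\<Sum>k. g (Suc k))"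
  proof -
    have "(\<Sum>k\<in>{1..<N}. g k) = (\<Sum>k<N-1. g (Suc k))"
      by (rule sum.reindex_bij_witness[where i="\<lambda>k. Suc k" and j="\<lambda>k. k - 1"]) auto
    also have "\<dots> \<le> (\<Sum>k. g (Suc k))"
      by (rule sum_le_suminf) (use summ g0 in \<open>auto simp: g_def\<close>)
    finally show ?thesis .
  qed
  have "(\<Sum>k<N. w k) \<le> 1 + (\<Sum>k\<in>{1..<N}. C * (g k + g (N-k)))"
    unfolding split w0 by (intro add_left_mono sum_mono) (use wk in auto)
  also have "\<dots> = 1 + 2 * C * (\<Sum>k\<in>{1..<N}. g k)"
    by (simp add: sum_distrib_left[symmetric] sum.distrib reflect[simplified])
  also have "\<dots> \<le> 1 + 2 * C * (\<Sum>k. g (Suc k))" using tail C0 by (simp add: mult_left_mono)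
  finally show ?thesis unfolding w_def C_def g_def .
qed

theorem lemma4p3:
  fixes \<mu> p q :: real and \<rho> :: "nat \<Rightarrow> real"
  assumes "\<mu> > 1" and "p \<ge> 2" and "q = p / (p - 1)"
    and "\<And>k. k \<ge> 1 \<Longrightarrow> \<rho> k > 0"
    and "\<And>k l. 1 \<le> k \<Longrightarrow> k \<le> l \<Longrightarrow> \<rho> k \<le> \<rho> l"
    and "summable (\<lambda>k. (\<rho> (Suc k) / real (Suc k)) powr q)"
  shows "\<exists>B::real. \<forall>N \<ge> 3. \<forall>\<delta> > 0. \<forall>z \<in> Cdelta \<delta> (\<mu> * gamma1 N) \<rho> N.
           pnorm_pow p N (xvec N z) \<le> \<delta> powr p * real N * B"
proof -
  note mu = assms(1) and p = assms(2) and q = assms(3) and rho = assms(4) and summ = assms(6)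
  define K where
    "K = 1 + 2 * (3 / sqrt (\<mu> - 1)) powr q * (\<Sum>k. (\<rho> (Suc k) / real (Suc k)) powr q)"
  have exponent: "q * (p-1) = p" using p q by simp
  show ?thesis
  proof (intro exI[of _ "hy_constant p * K powr (p-1)"] allI impI ballI)
    fix N :: nat and \<delta> :: real and z
    assume N: "N \<ge> 3" and \<delta>: "\<delta> > 0" and z: "z \<in> Cdelta \<delta> (\<mu> * gamma1 N) \<rho> N"
    define W where "W = (\<Sum>k<N. box_radius (\<mu> * gamma1 N) \<rho> N k powr q)"
    have W_le_K: "W \<le> K" unfolding W_def K_def
      using box_radius_power_sum_bound[OF mu _ _ rho summ] N p q by simp
    have za: "\<forall>k<N. cmod (z k) \<le> \<delta> * box_radius (\<mu> * gamma1 N) \<rho> N k"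
      using z unfolding Cdelta_def box_radius_def by auto
    have scale: "(\<Sum>k<N. (\<delta> * box_radius (\<mu> * gamma1 N) \<rho> N k) powr q) powr (p-1)
                  = \<delta> powr p * W powr (p-1)"
      using \<delta> exponent unfolding W_def
      by (simp add: powr_mult sum_distrib_left[symmetric] powr_powr)
    have "pnorm_pow p N (xvec N z) \<le> hy_constant p * real N * (\<delta> powr p * W powr (p-1))"
      unfolding pnorm_pow_def scale[symmetric] by (rule dft_hausdorff_young[OF p q za])
    also have "\<dots> \<le> hy_constant p * real N * (\<delta> powr p * K powr (p-1))"
      using hy_constant_nonneg[OF p] W_le_K p unfolding W_def
      by (intro mult_left_mono powr_mono2) (auto simp: sum_nonneg)
    finally show "pnorm_pow p N (xvec N z) \<le> \<delta> powr p * real N * (hy_constant p * K powr (p-1))"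
      by (simp add: mult_ac)
  qed
qed

end
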